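(* For all $n,m,N\in\mathbb{Z}$ the following bilinear equations hold: \begin{align*} &(1-Q^{-12m}{\alpha_2}^{12})\tau^{n,m}_{N+1}\tau^{n,m}_{N-1} +Q^{n-11m}\alpha_0{\alpha_2}^{11}\tau^{n+1,m+1}_{N}\tau^{n-1,m-1}_{N} -Q^{n-2m}\alpha_0{\alpha_2}^{2}\tau^{n,m+1}_{N}\tau^{n,m-1}_{N}=0,\\ &(1-Q^{12n}{\alpha_0}^{12})\tau^{n,m}_{N+1}\tau^{n,m}_{N-1} +Q^{10n+m}{\alpha_0}^{10}{\alpha_2}^{-1}\tau^{n+1,m}_{N}\tau^{n-1,m}_{N} -Q^{n+m}\alpha_0{\alpha_2}^{-1}\tau^{n+1,m+1}_{N}\tau^{n-1,m-1}_{N}=0,\\ &(1-Q^{12n-12m}{\alpha_0}^{12}{\alpha_2}^{12})\tau^{n,m}_{N+1}\tau^{n,m}_{N-1} +Q^{10n-11m}{\alpha_0}^{10}{\alpha_2}^{11}\tau^{n+1,m}_{N}\tau^{n-1,m}_{N} -Q^{n-2m}\alpha_0{\alpha_2}^{2}\tau^{n,m+1}_{N}\tau^{n,m-1}_{N}=0. \end{align*}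
   Context: Let $Q\in\mathbb{C}^\times$ be generic and let $\alpha_0,\alpha_1,\gamma$ be indeterminates; put $\alpha_2:=Q\alpha_0^{-1}\alpha_1^{-1}$, so $\alpha_0\alpha_1\alpha_2=Q$ (sixth roots of the usual parameters: $q=Q^6$, $a_i=\alpha_i^6$, $c=\gamma^6$). Let $\tau_i,\bar\tau_i$ ($i\in\mathbb{Z}/3\mathbb{Z}$) be six further indeterminates and $K=\mathbb{C}(\alpha_0,\alpha_1,\gamma,\tau_0,\tau_1,\tau_2,\bar\tau_0,\bar\tau_1,\bar\tau_2)$. Indices are taken mod 3. Define field automorphisms $s_0,s_1,s_2,\pi,w_0,w_1,r$ of $K$ (fixing $\mathbb{C}$): on parameters $s_i(\alpha_i)=\alpha_i^{-1}$, $s_i(\alpha_j)=\alpha_j\alpha_i$ ($j\neq i$), $\pi(\alpha_j)=\alpha_{j+1}$, $s_i(\gamma)=\pi(\gamma)=\gamma$; $w_0,w_1,r$ fix every $\alpha_j$, and $w_0(\gamma)=\gamma^{-1}$, $w_1(\gamma)=Q^{-2}\gamma^{-1}$, $r(\gamma)=Q^{-1}\gamma^{-1}$. With $u_i=Q^{-2}\gamma^{-4}\alpha_i^6$, $v_i=Q^{2}\gamma^{4}\alpha_i^6$: $s_i(\tau_i)=\dfrac{u_i\tau_{i+1}\bar\tau_{i-1}+\bar\tau_{i+1}\tau_{i-1}}{Q^{-1}\gamma^{-2}\alpha_i^{3}\,\bar\tau_i}$, $s_i(\bar\tau_i)=\dfrac{v_i\bar\tau_{i+1}\tau_{i-1}+\tau_{i+1}\bar\tau_{i-1}}{Q\gamma^{2}\alpha_i^{3}\,\tau_i}$,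 $s_i$ fixes $\tau_j,\bar\tau_j$ ($j\ne i$); $\pi(\tau_i)=\tau_{i+1}$, $\pi(\bar\tau_i)=\bar\tau_{i+1}$; $w_0(\tau_i)=\tau_i$, $w_0(\bar\tau_i)=\dfrac{\alpha_{i+1}^2(\bar\tau_i\tau_{i+1}\tau_{i+2}+u_{i-1}\tau_i\bar\tau_{i+1}\tau_{i+2}+u_{i+1}^{-1}\tau_i\tau_{i+1}\bar\tau_{i+2})}{\alpha_{i+2}^2\,\bar\tau_{i+1}\bar\tau_{i+2}}$; $w_1(\bar\tau_i)=\bar\tau_i$, $w_1(\tau_i)=\dfrac{\alpha_{i+1}^2(\tau_i\bar\tau_{i+1}\bar\tau_{i+2}+v_{i-1}\bar\tau_i\tau_{i+1}\bar\tau_{i+2}+v_{i+1}^{-1}\bar\tau_i\bar\tau_{i+1}\tau_{i+2})}{\alpha_{i+2}^2\,\tau_{i+1}\tau_{i+2}}$; $r(\tau_i)=\bar\tau_i$, $r(\bar\tau_i)=\tau_i$. Products of generators denote composition ($xy=x\circ y$). Set $T_1=\pi s_2s_1$, $T_2=s_1\pi s_2$, $T_4=rw_0$ (these commute), and define $\tau^{n,m}_N=T_1^{\,n}T_2^{\,m}T_4^{\,N}(\tau_1)$ for $n,m,N\in\mathbb{Z}$. *)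

theory Defs
  imports Complex_Main "HOL-Library.Poly_Mapping" "HOL-Library.Numeral_Type"
    "HOL-Computational_Algebra.Fraction_Field"
begin

text \<open>Nine indeterminates, indexed by the type 9 (0..8):
  0 = alpha0, 1 = alpha1, 2 = gamma, 3,4,5 = tau0,tau1,tau2, 6,7,8 = taubar0,taubar1,taubar2.\<close>

type_synonym mpoly = "(9 \<Rightarrow>\<^sub>0 nat) \<Rightarrow>\<^sub>0 complex"
type_synonym rfun = "mpoly fract"

definition mvar :: "9 \<Rightarrow> mpoly" where
  "mvar i = Poly_Mapping.single (Poly_Mapping.single i 1) 1"

definition mconst :: "complex \<Rightarrow> mpoly" where
  "mconst c = Poly_Mapping.single 0 c"

definition var :: "9 \<Rightarrow> rfun" where
  "var i = Fract (mvar i) 1"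

definition cst :: "complex \<Rightarrow> rfun" where
  "cst c = Fract (mconst c) 1"

definition evP :: "(9 \<Rightarrow> rfun) \<Rightarrow> mpoly \<Rightarrow> rfun" where
  "evP f p = (\<Sum>mo\<in>Poly_Mapping.keys p.
      cst (Poly_Mapping.lookup p mo) * (\<Prod>i\<in>Poly_Mapping.keys mo. f i ^ Poly_Mapping.lookup mo i))"

definition subst :: "(9 \<Rightarrow> rfun) \<Rightarrow> rfun \<Rightarrow> rfun" where
  "subst f x = (THE r. \<forall>a b. b \<noteq> 0 \<and> x = Fract a b \<longrightarrow> r = evP f a / evP f b)"

definition mkimg :: "rfun \<Rightarrow> rfun \<Rightarrow> rfun \<Rightarrow> (int \<Rightarrow> rfun) \<Rightarrow> (int \<Rightarrow> rfun) \<Rightarrow> 9 \<Rightarrow> rfun" where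
  "mkimg A0 A1 G T TB = (\<lambda>j.
     if j = 0 then A0 else if j = 1 then A1 else if j = 2 then G
     else if j = 3 then T 0 else if j = 4 then T 1 else if j = 5 then T 2
     else if j = 6 then TB 0 else if j = 7 then TB 1 else TB 2)"

definition tau :: "int \<Rightarrow> rfun" where
  "tau i = var (of_int (3 + i mod 3))"

definition taub :: "int \<Rightarrow> rfun" where
  "taub i = var (of_int (6 + i mod 3))"

definition gam :: rfun where "gam = var 2"

definition alpha :: "complex \<Rightarrow> int \<Rightarrow> rfun" where
  "alpha Q i = (if i mod 3 = 0 then var 0 else if i mod 3 = 1 then var 1
                else cst Q * inverse (var 0 * var 1))"

definition uu :: "complex \<Rightarrow> int \<Rightarrow> rfun" where
  "uu Q i = cst Q powi (-2) * gam powi (-4) * alpha Q i ^ 6"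

definition vv :: "complex \<Rightarrow> int \<Rightarrow> rfun" where
  "vv Q i = cst Q powi 2 * gam powi 4 * alpha Q i ^ 6"

definition s_aut :: "complex \<Rightarrow> int \<Rightarrow> rfun \<Rightarrow> rfun" where
  "s_aut Q i = subst (mkimg
     (if i mod 3 = 0 then inverse (alpha Q i) else alpha Q 0 * alpha Q i)
     (if i mod 3 = 1 then inverse (alpha Q i) else alpha Q 1 * alpha Q i)
     gam
     (\<lambda>j. if j mod 3 = i mod 3 then
           (uu Q i * tau (i+1) * taub (i-1) + taub (i+1) * tau (i-1))
           / (cst Q powi (-1) * gam powi (-2) * alpha Q i ^ 3 * taub i)
          else tau j)
     (\<lambda>j. if j mod 3 = i mod 3 then
           (vv Q i * taub (i+1) * tau (i-1) + tau (i+1) * taub (i-1))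
           / (cst Q * gam ^ 2 * alpha Q i ^ 3 * tau i)
          else taub j))"

definition pi_aut :: "complex \<Rightarrow> rfun \<Rightarrow> rfun" where
  "pi_aut Q = subst (mkimg (alpha Q 1) (alpha Q 2) gam (\<lambda>j. tau (j+1)) (\<lambda>j. taub (j+1)))"

definition w0_aut :: "complex \<Rightarrow> rfun \<Rightarrow> rfun" where
  "w0_aut Q = subst (mkimg (alpha Q 0) (alpha Q 1) (inverse gam) tau
     (\<lambda>i. alpha Q (i+1) ^ 2 * (taub i * tau (i+1) * tau (i+2)
            + uu Q (i-1) * tau i * taub (i+1) * tau (i+2)
            + inverse (uu Q (i+1)) * tau i * tau (i+1) * taub (i+2))
          / (alpha Q (i+2) ^ 2 * taub (i+1) * taub (i+2))))"

definition w1_aut :: "complex \<Rightarrow> rfun \<Rightarrow> rfun" where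
  "w1_aut Q = subst (mkimg (alpha Q 0) (alpha Q 1) (cst Q powi (-2) * inverse gam)
     (\<lambda>i. alpha Q (i+1) ^ 2 * (tau i * taub (i+1) * taub (i+2)
            + vv Q (i-1) * taub i * tau (i+1) * taub (i+2)
            + inverse (vv Q (i+1)) * taub i * taub (i+1) * tau (i+2))
          / (alpha Q (i+2) ^ 2 * tau (i+1) * tau (i+2)))
     taub)"

definition r_aut :: "complex \<Rightarrow> rfun \<Rightarrow> rfun" where
  "r_aut Q = subst (mkimg (alpha Q 0) (alpha Q 1) (cst Q powi (-1) * inverse gam) taub tau)"

definition zpow :: "('a \<Rightarrow> 'a) \<Rightarrow> int \<Rightarrow> 'a \<Rightarrow> 'a" where
  "zpow f n = (if 0 \<le> n then f ^^ nat n else (inv f) ^^ nat (- n))"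

definition T1 :: "complex \<Rightarrow> rfun \<Rightarrow> rfun" where
  "T1 Q = pi_aut Q \<circ> s_aut Q 2 \<circ> s_aut Q 1"

definition T2 :: "complex \<Rightarrow> rfun \<Rightarrow> rfun" where
  "T2 Q = s_aut Q 1 \<circ> pi_aut Q \<circ> s_aut Q 2"

definition T4 :: "complex \<Rightarrow> rfun \<Rightarrow> rfun" where
  "T4 Q = r_aut Q \<circ> w0_aut Q"

definition tauNM :: "complex \<Rightarrow> int \<Rightarrow> int \<Rightarrow> int \<Rightarrow> rfun" where
  "tauNM Q n m N = (zpow (T1 Q) n \<circ> zpow (T2 Q) m \<circ> zpow (T4 Q) N) (tau 1)"

end

theory Submission
  imports Defs
begin

text \<open>Every generator of the group is a substitution of rational functions, determined by the
  images of the nine variables. Substituting one image table and then specialising at another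
  returns the variables, so these substitutions are automorphisms, and each group relation can be
  checked variable by variable as an identity of explicit rational functions. In particular
  \<open>T1\<close>, \<open>T2\<close>, \<open>T4\<close> commute, so \<open>T1^n T2^m T4^N\<close> sends \<open>\<tau>^{a,b}_c\<close> to
  \<open>\<tau>^{n+a,m+b}_{N+c}\<close>, and it scales \<open>\<alpha>0\<close> by \<open>Q^n\<close> and \<open>\<alpha>2\<close> by \<open>Q^-m\<close>. Hence each
  bilinear equation is the image of its instance at the origin, which is an identity between
  \<open>\<tau>1\<close> and its neighbours, all of them explicit rational functions.\<close>

section \<open>Evaluation of polynomials\<close>

lemma poly_mapping_sum_single:
  "(p::'a \<Rightarrow>\<^sub>0 'b::comm_monoid_add) =
     (\<Sum>k\<in>Poly_Mapping.keys p. Poly_Mapping.single k (Poly_Mapping.lookup p k))"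
  by (rule poly_mapping_eqI) (simp add: lookup_sum lookup_single when_def in_keys_iff)

definition monom_eval :: "(9 \<Rightarrow> 'a::comm_ring_1) \<Rightarrow> (9 \<Rightarrow>\<^sub>0 nat) \<Rightarrow> 'a" where
  "monom_eval f mo = (\<Prod>i\<in>Poly_Mapping.keys mo. f i ^ Poly_Mapping.lookup mo i)"

definition poly_eval :: "(complex \<Rightarrow> 'a::comm_ring_1) \<Rightarrow> (9 \<Rightarrow> 'a) \<Rightarrow> mpoly \<Rightarrow> 'a" where
  "poly_eval cc f p =
     (\<Sum>mo\<in>Poly_Mapping.keys p. cc (Poly_Mapping.lookup p mo) * monom_eval f mo)"

lemma evP_eq_poly_eval: "evP f p = poly_eval cst f p"
  by (simp add: evP_def poly_eval_def monom_eval_def)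

lemma monom_eval_UNIV: "monom_eval f mo = (\<Prod>i\<in>UNIV. f i ^ Poly_Mapping.lookup mo i)"
  unfolding monom_eval_def by (rule prod.mono_neutral_left) (auto simp: in_keys_iff)

lemma monom_eval_add: "monom_eval f (k + l) = monom_eval f k * monom_eval f l"
  by (simp add: monom_eval_UNIV lookup_add power_add prod.distrib)

lemma monom_eval_zero [simp]: "monom_eval f 0 = 1"
  by (simp add: monom_eval_def)

lemma monom_eval_single: "monom_eval f (Poly_Mapping.single i 1) = f i"
  by (simp add: monom_eval_def)

locale scalar_hom =
  fixes cc :: "complex \<Rightarrow> 'a::comm_ring_1"
  assumes scalar_add: "cc (a + b) = cc a + cc b"
    and scalar_mult: "cc (a * b) = cc a * cc b"
    and scalar_one: "cc 1 = 1"
begin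

lemma scalar_zero: "cc 0 = 0"
  using scalar_add[of 0 0] by simp

lemma poly_eval_superset:
  "finite S \<Longrightarrow> Poly_Mapping.keys p \<subseteq> S \<Longrightarrow>
     poly_eval cc f p = (\<Sum>mo\<in>S. cc (Poly_Mapping.lookup p mo) * monom_eval f mo)"
  unfolding poly_eval_def by (rule sum.mono_neutral_left) (auto simp: in_keys_iff scalar_zero)

lemma poly_eval_add: "poly_eval cc f (p + q) = poly_eval cc f p + poly_eval cc f q"
proof -
  let ?S = "Poly_Mapping.keys p \<union> Poly_Mapping.keys q"
  have "poly_eval cc f (p + q) = (\<Sum>mo\<in>?S. cc (Poly_Mapping.lookup (p + q) mo) * monom_eval f mo)"
    using keys_add[of p q] by (intro poly_eval_superset) auto
  also have "\<dots> = (\<Sum>mo\<in>?S. cc (Poly_Mapping.lookup p mo) * monom_eval f mo)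
                 + (\<Sum>mo\<in>?S. cc (Poly_Mapping.lookup q mo) * monom_eval f mo)"
    by (simp add: lookup_add scalar_add distrib_right sum.distrib)
  also have "\<dots> = poly_eval cc f p + poly_eval cc f q"
    by (subst (1 2) poly_eval_superset[of ?S]) auto
  finally show ?thesis .
qed

lemma poly_eval_zero [simp]: "poly_eval cc f 0 = 0"
  by (simp add: poly_eval_def)

lemma poly_eval_single: "poly_eval cc f (Poly_Mapping.single k c) = cc c * monom_eval f k"
  by (subst poly_eval_superset[of "{k}"]) (auto simp: scalar_zero)

lemma poly_eval_sum: "poly_eval cc f (sum g S) = (\<Sum>x\<in>S. poly_eval cc f (g x))"
  by (induction S rule: infinite_finite_induct) (auto simp: poly_eval_add)

lemma poly_eval_mult: "poly_eval cc f (p * q) = poly_eval cc f p * poly_eval cc f q"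
proof -
  have "p * q = (\<Sum>k\<in>Poly_Mapping.keys p. \<Sum>l\<in>Poly_Mapping.keys q.
      Poly_Mapping.single (k + l) (Poly_Mapping.lookup p k * Poly_Mapping.lookup q l))"
    by (subst (1 2) poly_mapping_sum_single) (simp add: sum_product mult_single)
  then have "poly_eval cc f (p * q) = (\<Sum>k\<in>Poly_Mapping.keys p. \<Sum>l\<in>Poly_Mapping.keys q.
      cc (Poly_Mapping.lookup p k) * monom_eval f k * (cc (Poly_Mapping.lookup q l) * monom_eval f l))"
    by (simp add: poly_eval_sum poly_eval_single scalar_mult monom_eval_add mult_ac)
  then show ?thesis
    by (simp add: poly_eval_def sum_product)
qed

lemma poly_eval_one [simp]: "poly_eval cc f 1 = 1"
  using poly_eval_single[of f 0 1] by (simp add: scalar_one)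

lemma poly_eval_uminus: "poly_eval cc f (- p) = - poly_eval cc f p"
  using poly_eval_add[of f p "- p"] by (simp add: eq_neg_iff_add_eq_0 add.commute)

lemma poly_eval_mvar [simp]: "poly_eval cc f (mvar i) = f i"
  using monom_eval_single[of f i] by (simp add: mvar_def poly_eval_single scalar_one)

lemma poly_eval_mconst [simp]: "poly_eval cc f (mconst c) = cc c"
  by (simp add: mconst_def poly_eval_single)

end

lemma cst_add: "cst (a + b) = cst a + cst b"
  by (simp add: cst_def mconst_def single_add)

lemma cst_mult: "cst (a * b) = cst a * cst b"
  by (simp add: cst_def mconst_def mult_single)

lemma cst_1 [simp]: "cst 1 = 1"
  by (simp add: cst_def mconst_def fract_collapse)

lemma cst_0 [simp]: "cst 0 = 0"
  by (simp add: cst_def mconst_def fract_collapse)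


definition evaluates_to :: "(complex \<Rightarrow> 'a::field) \<Rightarrow> (9 \<Rightarrow> 'a) \<Rightarrow> rfun \<Rightarrow> 'a \<Rightarrow> bool" where
  "evaluates_to cc g x y \<longleftrightarrow> (\<exists>a b. b \<noteq> 0 \<and> x = Fract a b \<and> poly_eval cc g b \<noteq> 0
      \<and> y = poly_eval cc g a / poly_eval cc g b)"

locale field_scalar_hom = scalar_hom cc for cc :: "complex \<Rightarrow> 'a::field"
begin

lemma evaluates_to_unique:
  assumes "evaluates_to cc g x y" "evaluates_to cc g x y'"
  shows "y = y'"
proof -
  obtain a b where ab: "b \<noteq> 0" "x = Fract a b" "poly_eval cc g b \<noteq> 0"
      "y = poly_eval cc g a / poly_eval cc g b"
    using assms(1) by (auto simp: evaluates_to_def)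
  obtain a' b' where ab': "b' \<noteq> 0" "x = Fract a' b'" "poly_eval cc g b' \<noteq> 0"
      "y' = poly_eval cc g a' / poly_eval cc g b'"
    using assms(2) by (auto simp: evaluates_to_def)
  have "a * b' = a' * b"
    using ab ab' eq_fract(1) by metis
  then have "poly_eval cc g a * poly_eval cc g b' = poly_eval cc g a' * poly_eval cc g b"
    by (metis poly_eval_mult)
  then show ?thesis
    using ab ab' by (simp add: frac_eq_eq)
qed

lemma evaluates_to_var: "evaluates_to cc g (var i) (g i)"
  unfolding evaluates_to_def
  by (rule exI[of _ "mvar i"], rule exI[of _ 1]) (simp add: var_def)

lemma evaluates_to_cst: "evaluates_to cc g (cst c) (cc c)"
  unfolding evaluates_to_def
  by (rule exI[of _ "mconst c"], rule exI[of _ 1]) (simp add: cst_def)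

lemma evaluates_to_0: "evaluates_to cc g 0 0"
  using evaluates_to_cst[of g 0] by (simp add: scalar_zero)

lemma evaluates_to_1: "evaluates_to cc g 1 1"
  using evaluates_to_cst[of g 1] by (simp add: scalar_one)

lemma evaluates_to_add:
  assumes "evaluates_to cc g x u" "evaluates_to cc g y v"
  shows "evaluates_to cc g (x + y) (u + v)"
proof -
  obtain a b where ab: "b \<noteq> 0" "x = Fract a b" "poly_eval cc g b \<noteq> 0"
      "u = poly_eval cc g a / poly_eval cc g b"
    using assms(1) by (auto simp: evaluates_to_def)
  obtain c d where cd: "d \<noteq> 0" "y = Fract c d" "poly_eval cc g d \<noteq> 0"
      "v = poly_eval cc g c / poly_eval cc g d"
    using assms(2) by (auto simp: evaluates_to_def)
  show ?thesis unfolding evaluates_to_def ab(4) cd(4)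
    by (rule exI[of _ "a * d + c * b"], rule exI[of _ "b * d"])
      (use ab(1-3) cd(1-3) in \<open>simp add: poly_eval_mult poly_eval_add field_simps\<close>)
qed

lemma evaluates_to_mult:
  assumes "evaluates_to cc g x u" "evaluates_to cc g y v"
  shows "evaluates_to cc g (x * y) (u * v)"
proof -
  obtain a b where ab: "b \<noteq> 0" "x = Fract a b" "poly_eval cc g b \<noteq> 0"
      "u = poly_eval cc g a / poly_eval cc g b"
    using assms(1) by (auto simp: evaluates_to_def)
  obtain c d where cd: "d \<noteq> 0" "y = Fract c d" "poly_eval cc g d \<noteq> 0"
      "v = poly_eval cc g c / poly_eval cc g d"
    using assms(2) by (auto simp: evaluates_to_def)
  show ?thesis unfolding evaluates_to_def
    by (rule exI[of _ "a * c"], rule exI[of _ "b * d"])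
      (use ab cd in \<open>simp add: poly_eval_mult\<close>)
qed

lemma evaluates_to_uminus:
  assumes "evaluates_to cc g x u"
  shows "evaluates_to cc g (- x) (- u)"
proof -
  obtain a b where ab: "b \<noteq> 0" "x = Fract a b" "poly_eval cc g b \<noteq> 0"
      "u = poly_eval cc g a / poly_eval cc g b"
    using assms by (auto simp: evaluates_to_def)
  show ?thesis unfolding evaluates_to_def
    by (rule exI[of _ "- a"], rule exI[of _ b]) (use ab in \<open>simp add: poly_eval_uminus\<close>)
qed

lemma evaluates_to_diff:
  "evaluates_to cc g x u \<Longrightarrow> evaluates_to cc g y v \<Longrightarrow> evaluates_to cc g (x - y) (u - v)"
  using evaluates_to_add[of g x u "- y" "- v"] evaluates_to_uminus[of g y v] by simp

lemma evaluates_to_inverse: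
  assumes "evaluates_to cc g x u" "u \<noteq> 0"
  shows "evaluates_to cc g (inverse x) (inverse u)"
proof -
  obtain a b where ab: "b \<noteq> 0" "x = Fract a b" "poly_eval cc g b \<noteq> 0"
      "u = poly_eval cc g a / poly_eval cc g b"
    using assms(1) by (auto simp: evaluates_to_def)
  have "poly_eval cc g a \<noteq> 0"
    using ab assms(2) by simp
  then have "a \<noteq> 0"
    by auto
  show ?thesis unfolding evaluates_to_def
    by (rule exI[of _ b], rule exI[of _ a])
      (use ab \<open>a \<noteq> 0\<close> \<open>poly_eval cc g a \<noteq> 0\<close> in simp)
qed

lemma evaluates_to_divide:
  "evaluates_to cc g x u \<Longrightarrow> evaluates_to cc g y v \<Longrightarrow> v \<noteq> 0 \<Longrightarrow>
     evaluates_to cc g (x / y) (u / v)"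
  by (simp add: divide_inverse evaluates_to_mult evaluates_to_inverse)

lemma evaluates_to_power: "evaluates_to cc g x u \<Longrightarrow> evaluates_to cc g (x ^ n) (u ^ n)"
  by (induction n) (simp_all add: evaluates_to_1 evaluates_to_mult)

lemma evaluates_to_powi:
  "evaluates_to cc g x u \<Longrightarrow> u \<noteq> 0 \<Longrightarrow> evaluates_to cc g (x powi k) (u powi k)"
  by (simp add: power_int_def evaluates_to_power evaluates_to_inverse)

lemma evaluates_to_eq_value: "evaluates_to cc g x y \<Longrightarrow> y = z \<Longrightarrow> evaluates_to cc g x z"
  by simp

lemmas evaluates_to_intros = evaluates_to_add evaluates_to_mult evaluates_to_diff
  evaluates_to_uminus evaluates_to_divide evaluates_to_inverse evaluates_to_powi
  evaluates_to_power evaluates_to_var evaluates_to_cst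

lemma evaluates_to_evP:
  "(\<And>i. evaluates_to cc g (f i) (h i)) \<Longrightarrow> evaluates_to cc g (evP f p) (poly_eval cc h p)"
proof -
  assume fh: "\<And>i. evaluates_to cc g (f i) (h i)"
  have sum: "(\<And>s. s \<in> S \<Longrightarrow> evaluates_to cc g (X s) (U s)) \<Longrightarrow>
      evaluates_to cc g (sum X S) (sum U S)" for S and X :: "_ \<Rightarrow> rfun" and U
    by (induction S rule: infinite_finite_induct) (simp_all add: evaluates_to_0 evaluates_to_add)
  have prod: "(\<And>s. s \<in> S \<Longrightarrow> evaluates_to cc g (X s) (U s)) \<Longrightarrow>
      evaluates_to cc g (prod X S) (prod U S)" for S and X :: "_ \<Rightarrow> rfun" and U
    by (induction S rule: infinite_finite_induct) (simp_all add: evaluates_to_1 evaluates_to_mult)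
  show ?thesis
    unfolding evP_def poly_eval_def monom_eval_def
    by (intro sum evaluates_to_mult evaluates_to_cst prod evaluates_to_power fh)
qed

end

interpretation cst: field_scalar_hom cst
  by unfold_locales (simp_all add: cst_add cst_mult)

interpretation complex: field_scalar_hom "\<lambda>c::complex. c"
  by unfold_locales simp_all

lemma Fract_add_1: "Fract (a + b) 1 = Fract a 1 + Fract b 1"
  by simp

lemma Fract_mult_1: "Fract (a * b) 1 = Fract a 1 * Fract b 1"
  by simp

lemma Fract_sum: "Fract (sum g S) 1 = (\<Sum>x\<in>S. Fract (g x) 1)"
  by (induction S rule: infinite_finite_induct) (simp_all add: fract_collapse Fract_add_1 del: add_fract)

lemma Fract_prod: "Fract (prod g S) 1 = (\<Prod>x\<in>S. Fract (g x) 1)"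
  by (induction S rule: infinite_finite_induct) (simp_all add: fract_collapse Fract_mult_1 del: mult_fract)

lemma Fract_power: "Fract (a ^ n) 1 = Fract a 1 ^ n"
  by (induction n) (simp_all add: fract_collapse Fract_mult_1 del: mult_fract)

lemma mvar_power: "mvar i ^ e = Poly_Mapping.single (Poly_Mapping.single i e) 1"
  by (induction e) (simp_all add: mvar_def mult_single single_add[symmetric] add.commute)

lemma prod_single_one:
  "(\<Prod>i\<in>S. Poly_Mapping.single (g i) (1::complex)) = Poly_Mapping.single (\<Sum>i\<in>S. g i) 1"
  by (induction S rule: infinite_finite_induct) (simp_all add: mult_single)

lemma Fract_single: "Fract (Poly_Mapping.single k c) 1 = cst c * monom_eval var k"
proof -
  have "(\<Prod>i\<in>Poly_Mapping.keys k. mvar i ^ Poly_Mapping.lookup k i) = Poly_Mapping.single k 1"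
    by (simp add: mvar_power prod_single_one poly_mapping_sum_single[of k, symmetric])
  then have "monom_eval var k = Fract (Poly_Mapping.single k 1) 1"
    by (metis (no_types, lifting) monom_eval_def Fract_prod Fract_power var_def prod.cong)
  then show ?thesis
    by (simp add: cst_def mconst_def mult_single)
qed

lemma Fract_eq_evP_var: "Fract p 1 = evP var p"
proof -
  have "Fract p 1 =
      (\<Sum>k\<in>Poly_Mapping.keys p. Fract (Poly_Mapping.single k (Poly_Mapping.lookup p k)) 1)"
    by (subst poly_mapping_sum_single) (simp add: Fract_sum)
  then show ?thesis
    by (simp add: Fract_single evP_eq_poly_eval poly_eval_def)
qed

section \<open>C-linear field endomorphisms of K\<close>

locale rfun_hom =
  fixes h :: "rfun \<Rightarrow> rfun"
  assumes hom_add: "h (x + y) = h x + h y"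
    and hom_mult: "h (x * y) = h x * h y"
    and hom_inverse: "h (inverse x) = inverse (h x)"
    and hom_cst: "h (cst c) = cst c"
begin

lemma hom_0: "h 0 = 0"
  using hom_cst[of 0] by simp

lemma hom_1: "h 1 = 1"
  using hom_cst[of 1] by simp

lemma hom_uminus: "h (- x) = - h x"
  using hom_add[of x "- x"] by (simp add: hom_0 eq_neg_iff_add_eq_0 add.commute)

lemma hom_diff: "h (x - y) = h x - h y"
  using hom_add[of x "- y"] by (simp add: hom_uminus)

lemma hom_divide: "h (x / y) = h x / h y"
  by (simp add: divide_inverse hom_mult hom_inverse)

lemma hom_power: "h (x ^ n) = h x ^ n"
  by (induction n) (simp_all add: hom_1 hom_mult)

lemma hom_powi: "h (x powi k) = h x powi k"
  by (simp add: power_int_def hom_power hom_inverse)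

lemma hom_sum: "h (sum g S) = (\<Sum>x\<in>S. h (g x))"
  by (induction S rule: infinite_finite_induct) (simp_all add: hom_0 hom_add)

lemma hom_prod: "h (prod g S) = (\<Prod>x\<in>S. h (g x))"
  by (induction S rule: infinite_finite_induct) (simp_all add: hom_1 hom_mult)

lemma hom_eq_0_iff: "h x = 0 \<longleftrightarrow> x = 0"
proof
  assume "h x = 0"
  show "x = 0"
  proof (rule ccontr)
    assume "x \<noteq> 0"
    then have "h x * h (inverse x) = 1" by (simp flip: hom_mult add: hom_1)
    with \<open>h x = 0\<close> show False by simp
  qed
qed (simp add: hom_0)

lemmas hom_simps = hom_add hom_mult hom_diff hom_divide hom_inverse hom_power hom_powi
  hom_cst hom_uminus hom_0 hom_1

lemma hom_evP: "h (evP f p) = evP (h \<circ> f) p"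
  by (simp add: evP_def hom_sum hom_mult hom_prod hom_power hom_cst)

lemma hom_Fract: "h (Fract a b) = evP (\<lambda>i. h (var i)) a / evP (\<lambda>i. h (var i)) b"
proof (cases "b = 0")
  case True
  then show ?thesis by (simp add: fract_collapse hom_0 evP_eq_poly_eval)
next
  case False
  then have "Fract a b = Fract a 1 / Fract b 1"
    by (simp add: divide_fract_def)
  then show ?thesis
    by (simp add: Fract_eq_evP_var hom_divide hom_evP comp_def)
qed

end

text \<open>K is generated over C by the nine variables.\<close>
lemma rfun_hom_eqI:
  assumes "rfun_hom h" "rfun_hom k" "\<And>i. h (var i) = k (var i)"
  shows "h = k"
proof
  fix x :: rfun
  show "h x = k x"
    by (cases x) (simp add: rfun_hom.hom_Fract[OF assms(1)] rfun_hom.hom_Fract[OF assms(2)] assms(3))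
qed

lemma rfun_hom_comp: "rfun_hom h \<Longrightarrow> rfun_hom k \<Longrightarrow> rfun_hom (h \<circ> k)"
  by (simp add: rfun_hom_def)

lemma rfun_hom_comp_eqI:
  assumes "rfun_hom a" "rfun_hom b" "rfun_hom c" "rfun_hom d"
    and "\<And>i. a (b (var i)) = c (d (var i))"
  shows "a \<circ> b = c \<circ> d"
  using rfun_hom_eqI[OF rfun_hom_comp[OF assms(1,2)] rfun_hom_comp[OF assms(3,4)]] assms(5)
  by simp

lemma rfun_hom_id: "rfun_hom id"
  by (simp add: rfun_hom_def)

definition admissible :: "(9 \<Rightarrow> rfun) \<Rightarrow> bool" where
  "admissible f \<longleftrightarrow> (\<forall>b. b \<noteq> 0 \<longrightarrow> evP f b \<noteq> 0)"

lemma evP_add: "evP f (p + q) = evP f p + evP f q"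
  and evP_mult: "evP f (p * q) = evP f p * evP f q"
  and evP_one: "evP f 1 = 1"
  and evP_zero: "evP f 0 = 0"
  and evP_mvar: "evP f (mvar i) = f i"
  and evP_mconst: "evP f (mconst c) = cst c"
  by (simp_all add: evP_eq_poly_eval cst.poly_eval_add cst.poly_eval_mult)

lemma subst_Fract:
  assumes f: "admissible f" and b: "b \<noteq> 0"
  shows "subst f (Fract a b) = evP f a / evP f b"
  unfolding subst_def
proof (rule the_equality)
  show "\<forall>a' b'. b' \<noteq> 0 \<and> Fract a b = Fract a' b' \<longrightarrow> evP f a / evP f b = evP f a' / evP f b'"
  proof (intro allI impI)
    fix a' b' assume ab': "b' \<noteq> 0 \<and> Fract a b = Fract a' b'"
    then have "evP f a * evP f b' = evP f a' * evP f b"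
      using b by (metis eq_fract(1) evP_mult)
    moreover have "evP f b \<noteq> 0" "evP f b' \<noteq> 0"
      using f b ab' by (auto simp: admissible_def)
    ultimately show "evP f a / evP f b = evP f a' / evP f b'"
      by (simp add: divide_simps)
  qed
qed (use b in blast)

lemma rfun_hom_subst:
  assumes f: "admissible f"
  shows "rfun_hom (subst f)"
proof
  have nz: "b \<noteq> 0 \<Longrightarrow> evP f b \<noteq> 0" for b
    using f by (simp add: admissible_def)
  have zero: "subst f 0 = 0"
    using subst_Fract[OF f, of 1 0] by (simp add: fract_collapse evP_zero evP_one)
  fix x y :: rfun and c
  show "subst f (x + y) = subst f x + subst f y" "subst f (x * y) = subst f x * subst f y"
    by (cases x; cases y; simp add: subst_Fract[OF f] evP_add evP_mult nz field_simps)+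
  show "subst f (inverse x) = inverse (subst f x)"
  proof (cases x)
    case (Fract a b)
    then show ?thesis
      by (cases "a = 0") (simp_all add: subst_Fract[OF f] nz fract_collapse zero)
  qed
  show "subst f (cst c) = cst c"
    by (simp add: cst_def subst_Fract[OF f] evP_mconst evP_one)
qed

lemma subst_var: "admissible f \<Longrightarrow> subst f (var i) = f i"
  by (simp add: var_def subst_Fract evP_mvar evP_one)

lemma admissible_if_evaluates_to_var:
  assumes "\<And>i. evaluates_to cst g (f i) (var i)"
  shows "admissible f"
  unfolding admissible_def
proof (intro allI impI notI)
  fix b :: mpoly
  assume "b \<noteq> 0" and "evP f b = 0"
  have "evaluates_to cst g (evP f b) (poly_eval cst var b)"
    by (rule cst.evaluates_to_evP[OF assms])
  then have "poly_eval cst var b = 0"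
    using \<open>evP f b = 0\<close> cst.evaluates_to_0 cst.evaluates_to_unique by metis
  then have "Fract b 1 = 0"
    by (simp add: Fract_eq_evP_var evP_eq_poly_eval)
  with \<open>b \<noteq> 0\<close> show False
    by (simp add: Zero_fract_def eq_fract)
qed

lemma nonzero_if_evaluates_to_nonzero:
  "evaluates_to (\<lambda>c. c) g x v \<Longrightarrow> v \<noteq> 0 \<Longrightarrow> x \<noteq> 0"
  using complex.evaluates_to_unique complex.evaluates_to_0 by blast

lemma subst_eq_if_evaluates_to:
  assumes "admissible f" "evaluates_to cst f x y"
  shows "subst f x = y"
  using assms by (auto simp: evaluates_to_def subst_Fract evP_eq_poly_eval)

section \<open>Integer iterates of an invertible map\<close>

definition iter_int :: "('a \<Rightarrow> 'a) \<Rightarrow> ('a \<Rightarrow> 'a) \<Rightarrow> int \<Rightarrow> 'a \<Rightarrow> 'a" where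
  "iter_int f g n = (if 0 \<le> n then f ^^ nat n else g ^^ nat (- n))"

locale inverse_pair =
  fixes f g :: "'a \<Rightarrow> 'a"
  assumes comp_inverse: "f \<circ> g = id" and inverse_comp: "g \<circ> f = id"
begin

lemma zpow_eq_iter_int: "zpow f n = iter_int f g n"
  using inv_unique_comp[OF comp_inverse inverse_comp] by (simp add: zpow_def iter_int_def)

lemma iter_int_0: "iter_int f g 0 = id"
  and iter_int_1: "iter_int f g 1 = f"
  and iter_int_minus_1: "iter_int f g (- 1) = g"
  by (simp_all add: iter_int_def)

lemma iter_int_succ: "iter_int f g (n + 1) = f \<circ> iter_int f g n"
proof (cases "0 \<le> n")
  case True
  then have "nat (n + 1) = Suc (nat n)"
    by simp
  with True show ?thesis
    by (simp add: iter_int_def)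
next
  case False
  show ?thesis
  proof (cases "n = - 1")
    case True
    then show ?thesis
      using comp_inverse by (simp add: iter_int_def)
  next
    case False
    with \<open>\<not> 0 \<le> n\<close> have "nat (- n) = Suc (nat (- (n + 1)))" "\<not> 0 \<le> n + 1"
      by simp_all
    with \<open>\<not> 0 \<le> n\<close> show ?thesis
      by (simp add: iter_int_def comp_assoc[symmetric] comp_inverse)
  qed
qed

lemma iter_int_pred: "iter_int f g (n - 1) = g \<circ> iter_int f g n"
proof -
  have "g \<circ> iter_int f g n = (g \<circ> f) \<circ> iter_int f g (n - 1)"
    using iter_int_succ[of "n - 1"] by (simp add: comp_assoc)
  then show ?thesis
    by (simp add: inverse_comp)
qed

lemma iter_int_induct:
  assumes "P id" "\<And>h. P h \<Longrightarrow> P (f \<circ> h)" "\<And>h. P h \<Longrightarrow> P (g \<circ> h)"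
  shows "P (iter_int f g n)"
proof (induction n rule: int_induct[where k = 0])
  case base
  then show ?case using assms(1) by (simp only: iter_int_0)
next
  case (step1 i)
  then show ?case using assms(2) by (simp only: iter_int_succ)
next
  case (step2 i)
  then show ?case using assms(3) by (simp only: iter_int_pred)
qed

lemma iter_int_fixed:
  assumes "f x = x"
  shows "iter_int f g n x = x"
proof -
  have "g x = x"
    using assms inverse_comp by (metis comp_apply id_apply)
  then show ?thesis
    using assms by (induction n rule: int_induct[where k = 0]) (simp_all add: iter_int_0 iter_int_succ iter_int_pred)
qed

lemma iter_int_add: "iter_int f g (a + b) = iter_int f g a \<circ> iter_int f g b"
proof (induction a rule: int_induct[where k = 0])
  case base
  then show ?case by (simp add: iter_int_0)
next
  case (step1 i)
  have "iter_int f g (i + 1 + b) = iter_int f g ((i + b) + 1)"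
    by (simp add: ac_simps)
  with step1 show ?case
    by (simp add: iter_int_succ comp_assoc)
next
  case (step2 i)
  have "iter_int f g (i - 1 + b) = iter_int f g ((i + b) - 1)"
    by (simp add: algebra_simps)
  with step2 show ?case
    by (simp add: iter_int_pred comp_assoc)
qed

lemma commute_iter_int:
  assumes hf: "h \<circ> f = f \<circ> h"
  shows "h \<circ> iter_int f g n = iter_int f g n \<circ> h"
proof -
  have "h \<circ> g = g \<circ> f \<circ> h \<circ> g"
    by (simp add: inverse_comp)
  also have "\<dots> = g \<circ> h \<circ> (f \<circ> g)"
    by (metis comp_assoc hf)
  finally have hg: "h \<circ> g = g \<circ> h"
    by (simp add: comp_inverse)
  show ?thesis
  proof (induction n rule: int_induct[where k = 0])
    case base
    then show ?case by (simp add: iter_int_0)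
  next
    case (step1 i)
    have "h \<circ> iter_int f g (i + 1) = f \<circ> (h \<circ> iter_int f g i)"
      by (metis comp_assoc hf iter_int_succ)
    also have "\<dots> = iter_int f g (i + 1) \<circ> h"
      by (metis comp_assoc step1 iter_int_succ)
    finally show ?case .
  next
    case (step2 i)
    have "h \<circ> iter_int f g (i - 1) = g \<circ> (h \<circ> iter_int f g i)"
      by (metis comp_assoc hg iter_int_pred)
    also have "\<dots> = iter_int f g (i - 1) \<circ> h"
      by (metis comp_assoc step2 iter_int_pred)
    finally show ?case .
  qed
qed

end

lemma iter_int_commute:
  assumes "inverse_pair f1 g1" "inverse_pair f2 g2" "f1 \<circ> f2 = f2 \<circ> f1"
  shows "iter_int f1 g1 a \<circ> iter_int f2 g2 b = iter_int f2 g2 b \<circ> iter_int f1 g1 a"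
proof -
  have "f2 \<circ> iter_int f1 g1 a = iter_int f1 g1 a \<circ> f2"
    using inverse_pair.commute_iter_int[OF assms(1)] assms(3) by metis
  then show ?thesis
    by (metis inverse_pair.commute_iter_int[OF assms(2)])
qed

lemma iter_int_eigen:
  assumes inv: "inverse_pair f g"
    and "rfun_hom f" "rfun_hom g" "c \<noteq> 0" "f c = c" "f x = c * x"
  shows "iter_int f g n x = c powi n * x"
proof -
  have "g (f c) = c" "g (f x) = x"
    using inverse_pair.inverse_comp[OF inv] by (simp_all add: pointfree_idE)
  then have gc: "g c = c" and gx: "g x = inverse c * x"
    using assms(4-6) by (simp_all add: rfun_hom.hom_mult[OF assms(3)] field_simps)
  show ?thesis
  proof (induction n rule: int_induct[where k = 0])
    case base
    then show ?case by (simp add: inverse_pair.iter_int_0[OF inv])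
  next
    case (step1 i)
    then show ?case
      using assms(5,6) by (simp add: inverse_pair.iter_int_succ[OF inv] rfun_hom.hom_mult[OF assms(2)]
          rfun_hom.hom_powi[OF assms(2)] power_int_add)
  next
    case (step2 i)
    then show ?case
      using assms(4) gc gx by (simp add: inverse_pair.iter_int_pred[OF inv] rfun_hom.hom_mult[OF assms(3)]
          rfun_hom.hom_powi[OF assms(3)] power_int_diff field_simps)
  qed
qed

lemma rfun_hom_iter_int:
  "inverse_pair f g \<Longrightarrow> rfun_hom f \<Longrightarrow> rfun_hom g \<Longrightarrow> rfun_hom (iter_int f g n)"
  by (rule inverse_pair.iter_int_induct; (rule rfun_hom_id rfun_hom_comp | assumption)+)

text \<open>Relations between compositions, turned into rewrite rules for right-nested chains.\<close>
lemma comp_eq_rewrite: "A \<circ> B = C \<circ> D \<Longrightarrow> A \<circ> (B \<circ> f) = C \<circ> (D \<circ> f)"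
  by (metis comp_assoc)

lemma comp_eq_rewrite3: "A \<circ> (B \<circ> C) = D \<circ> (E \<circ> F) \<Longrightarrow> A \<circ> (B \<circ> (C \<circ> f)) = D \<circ> (E \<circ> (F \<circ> f))"
  by (metis comp_assoc)

lemma comp_id_rewrite: "A \<circ> B = id \<Longrightarrow> A \<circ> (B \<circ> f) = f"
  by (metis comp_assoc id_comp)

lemma power_int_numeral_mult: "(x::'a::division_ring) powi (numeral k * m) = (x powi m) ^ numeral k"
  by (metis mult.commute power_int_mult power_int_numeral)

section \<open>The generators of the symmetry group\<close>

lemma forall_num9:
  "P 0 \<Longrightarrow> P 1 \<Longrightarrow> P 2 \<Longrightarrow> P 3 \<Longrightarrow> P 4 \<Longrightarrow> P 5 \<Longrightarrow> P 6 \<Longrightarrow> P 7 \<Longrightarrow> P 8 \<Longrightarrow> P (k::9)"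
proof (cases k rule: bit1_cases)
  case (of_int z)
  then have "z \<in> {0, 1, 2, 3, 4, 5, 6, 7, 8}"
    by auto
  then show "P 0 \<Longrightarrow> P 1 \<Longrightarrow> P 2 \<Longrightarrow> P 3 \<Longrightarrow> P 4 \<Longrightarrow> P 5 \<Longrightarrow> P 6 \<Longrightarrow> P 7 \<Longrightarrow> P 8 \<Longrightarrow> P k"
    using of_int by auto
qed

lemma var_nonzero [simp]: "var i \<noteq> 0"
  using nonzero_if_evaluates_to_nonzero[OF complex.evaluates_to_var, of "\<lambda>_. 1"] by simp

lemma cst_eq_0_iff [simp]: "cst c = 0 \<longleftrightarrow> c = 0"
proof
  assume "cst c = 0"
  then have "evaluates_to (\<lambda>c. c) (\<lambda>_. 1) 0 c"
    using complex.evaluates_to_cst[of "\<lambda>_. 1" c] by simp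
  then show "c = 0"
    using complex.evaluates_to_0 complex.evaluates_to_unique by blast
qed simp

lemma tau_simps [simp]: "tau 0 = var 3" "tau 1 = var 4" "tau 2 = var 5"
  "tau 3 = var 3" "tau (-1) = var 5" "tau 4 = var 4"
  by (simp_all add: tau_def)

lemma taub_simps [simp]: "taub 0 = var 6" "taub 1 = var 7" "taub 2 = var 8"
  "taub 3 = var 6" "taub (-1) = var 8" "taub 4 = var 7"
  by (simp_all add: taub_def)

lemma gam_eq [simp]: "gam = var 2"
  by (simp add: gam_def)

lemma alpha_simps [simp]: "alpha Q 0 = var 0" "alpha Q 1 = var 1"
  "alpha Q 2 = cst Q * inverse (var 0 * var 1)"
  "alpha Q 3 = var 0" "alpha Q 4 = var 1" "alpha Q (-1) = cst Q * inverse (var 0 * var 1)"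
  by (simp_all add: alpha_def)

lemma uu_periodic: "uu Q (-1) = uu Q 2" "uu Q 3 = uu Q 0"
  by (simp_all add: uu_def)

definition s_img :: "complex \<Rightarrow> int \<Rightarrow> 9 \<Rightarrow> rfun" where
  "s_img Q i = mkimg
     (if i mod 3 = 0 then inverse (alpha Q i) else alpha Q 0 * alpha Q i)
     (if i mod 3 = 1 then inverse (alpha Q i) else alpha Q 1 * alpha Q i)
     gam
     (\<lambda>j. if j mod 3 = i mod 3 then
           (uu Q i * tau (i+1) * taub (i-1) + taub (i+1) * tau (i-1))
           / (cst Q powi (-1) * gam powi (-2) * alpha Q i ^ 3 * taub i)
          else tau j)
     (\<lambda>j. if j mod 3 = i mod 3 then
           (vv Q i * taub (i+1) * tau (i-1) + tau (i+1) * taub (i-1))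
           / (cst Q * gam ^ 2 * alpha Q i ^ 3 * tau i)
          else taub j)"

definition pi_img :: "complex \<Rightarrow> 9 \<Rightarrow> rfun" where
  "pi_img Q = mkimg (alpha Q 1) (alpha Q 2) gam (\<lambda>j. tau (j+1)) (\<lambda>j. taub (j+1))"

definition pi_inv_img :: "complex \<Rightarrow> 9 \<Rightarrow> rfun" where
  "pi_inv_img Q = mkimg (alpha Q 2) (alpha Q 0) gam (\<lambda>j. tau (j-1)) (\<lambda>j. taub (j-1))"

definition w0_img :: "complex \<Rightarrow> 9 \<Rightarrow> rfun" where
  "w0_img Q = mkimg (alpha Q 0) (alpha Q 1) (inverse gam) tau
     (\<lambda>i. alpha Q (i+1) ^ 2 * (taub i * tau (i+1) * tau (i+2)
            + uu Q (i-1) * tau i * taub (i+1) * tau (i+2)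
            + inverse (uu Q (i+1)) * tau i * tau (i+1) * taub (i+2))
          / (alpha Q (i+2) ^ 2 * taub (i+1) * taub (i+2)))"

definition r_img :: "complex \<Rightarrow> 9 \<Rightarrow> rfun" where
  "r_img Q = mkimg (alpha Q 0) (alpha Q 1) (cst Q powi (-1) * inverse gam) taub tau"

definition pi_inv_aut :: "complex \<Rightarrow> rfun \<Rightarrow> rfun" where
  "pi_inv_aut Q = subst (pi_inv_img Q)"

lemma aut_eq_subst_img:
  "s_aut Q i = subst (s_img Q i)" "pi_aut Q = subst (pi_img Q)"
  "w0_aut Q = subst (w0_img Q)" "r_aut Q = subst (r_img Q)"
  by (simp_all add: s_aut_def s_img_def pi_aut_def pi_img_def w0_aut_def w0_img_def
      r_aut_def r_img_def)

lemma s0_img: "s_img Q 0 0 = inverse (var 0)" "s_img Q 0 1 = var 1 * var 0" "s_img Q 0 2 = var 2"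
  "s_img Q 0 3 = (uu Q 0 * var 4 * var 8 + var 7 * var 5) / (cst Q powi (-1) * var 2 powi (-2) * var 0 ^ 3 * var 6)"
  "s_img Q 0 4 = var 4" "s_img Q 0 5 = var 5"
  "s_img Q 0 6 = (vv Q 0 * var 7 * var 5 + var 4 * var 8) / (cst Q * var 2 ^ 2 * var 0 ^ 3 * var 3)"
  "s_img Q 0 7 = var 7" "s_img Q 0 8 = var 8"
  by (simp_all add: s_img_def mkimg_def)

lemma s1_img: "s_img Q 1 0 = var 0 * var 1" "s_img Q 1 1 = inverse (var 1)" "s_img Q 1 2 = var 2"
  "s_img Q 1 3 = var 3"
  "s_img Q 1 4 = (uu Q 1 * var 5 * var 6 + var 8 * var 3) / (cst Q powi (-1) * var 2 powi (-2) * var 1 ^ 3 * var 7)"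
  "s_img Q 1 5 = var 5" "s_img Q 1 6 = var 6"
  "s_img Q 1 7 = (vv Q 1 * var 8 * var 3 + var 5 * var 6) / (cst Q * var 2 ^ 2 * var 1 ^ 3 * var 4)"
  "s_img Q 1 8 = var 8"
  by (simp_all add: s_img_def mkimg_def)

lemma s2_img: "s_img Q 2 0 = var 0 * (cst Q * inverse (var 0 * var 1))"
  "s_img Q 2 1 = var 1 * (cst Q * inverse (var 0 * var 1))" "s_img Q 2 2 = var 2"
  "s_img Q 2 3 = var 3" "s_img Q 2 4 = var 4"
  "s_img Q 2 5 = (uu Q 2 * var 3 * var 7 + var 6 * var 4) / (cst Q powi (-1) * var 2 powi (-2) * (cst Q * inverse (var 0 * var 1)) ^ 3 * var 8)"
  "s_img Q 2 6 = var 6" "s_img Q 2 7 = var 7"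
  "s_img Q 2 8 = (vv Q 2 * var 6 * var 4 + var 3 * var 7) / (cst Q * var 2 ^ 2 * (cst Q * inverse (var 0 * var 1)) ^ 3 * var 5)"
  by (simp_all add: s_img_def mkimg_def)

lemma w0_img: "w0_img Q 0 = var 0" "w0_img Q 1 = var 1" "w0_img Q 2 = inverse (var 2)"
  "w0_img Q 3 = var 3" "w0_img Q 4 = var 4" "w0_img Q 5 = var 5"
  "w0_img Q 6 = var 1 ^ 2 * (var 6 * var 4 * var 5 + uu Q 2 * var 3 * var 7 * var 5 + inverse (uu Q 1) * var 3 * var 4 * var 8) / ((cst Q * inverse (var 0 * var 1)) ^ 2 * var 7 * var 8)"
  "w0_img Q 7 = (cst Q * inverse (var 0 * var 1)) ^ 2 * (var 7 * var 5 * var 3 + uu Q 0 * var 4 * var 8 * var 3 + inverse (uu Q 2) * var 4 * var 5 * var 6) / (var 0 ^ 2 * var 8 * var 6)"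
  "w0_img Q 8 = var 0 ^ 2 * (var 8 * var 3 * var 4 + uu Q 1 * var 5 * var 6 * var 4 + inverse (uu Q 0) * var 5 * var 3 * var 7) / (var 1 ^ 2 * var 6 * var 7)"
  by (simp_all add: w0_img_def mkimg_def uu_periodic)

lemma pi_img: "pi_img Q 0 = var 1" "pi_img Q 1 = cst Q * inverse (var 0 * var 1)" "pi_img Q 2 = var 2"
  "pi_img Q 3 = var 4" "pi_img Q 4 = var 5" "pi_img Q 5 = var 3"
  "pi_img Q 6 = var 7" "pi_img Q 7 = var 8" "pi_img Q 8 = var 6"
  by (simp_all add: pi_img_def mkimg_def)

lemma pi_inv_img: "pi_inv_img Q 0 = cst Q * inverse (var 0 * var 1)" "pi_inv_img Q 1 = var 0"
  "pi_inv_img Q 2 = var 2" "pi_inv_img Q 3 = var 5" "pi_inv_img Q 4 = var 3" "pi_inv_img Q 5 = var 4"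
  "pi_inv_img Q 6 = var 8" "pi_inv_img Q 7 = var 6" "pi_inv_img Q 8 = var 7"
  by (simp_all add: pi_inv_img_def mkimg_def)

lemma r_img: "r_img Q 0 = var 0" "r_img Q 1 = var 1" "r_img Q 2 = cst Q powi (-1) * inverse (var 2)"
  "r_img Q 3 = var 6" "r_img Q 4 = var 7" "r_img Q 5 = var 8"
  "r_img Q 6 = var 3" "r_img Q 7 = var 4" "r_img Q 8 = var 5"
  by (simp_all add: r_img_def mkimg_def)

lemmas img_simps = s0_img s1_img s2_img w0_img pi_img pi_inv_img r_img

locale nonzero_param =
  fixes Q :: complex
  assumes Q_nonzero: "Q \<noteq> 0"
begin

lemma uu_nonzero [simp]: "uu Q i \<noteq> 0" and vv_nonzero [simp]: "vv Q i \<noteq> 0"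
  by (simp_all add: uu_def vv_def alpha_def Q_nonzero)

text \<open>Each numerator is seen to be nonzero by specialising one or two variables to 0 and the
  others to 1.\<close>
lemma numerators_nonzero:
  "uu Q 0 * var 4 * var 8 + var 7 * var 5 \<noteq> 0"
  "vv Q 0 * var 7 * var 5 + var 4 * var 8 \<noteq> 0"
  "uu Q 1 * var 5 * var 6 + var 8 * var 3 \<noteq> 0"
  "vv Q 1 * var 8 * var 3 + var 5 * var 6 \<noteq> 0"
  "uu Q 2 * var 3 * var 7 + var 6 * var 4 \<noteq> 0"
  "vv Q 2 * var 6 * var 4 + var 3 * var 7 \<noteq> 0"
  "var 6 * var 4 * var 5 + uu Q 2 * var 3 * var 7 * var 5 + inverse (uu Q 1) * var 3 * var 4 * var 8 \<noteq> 0"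
  "var 7 * var 5 * var 3 + uu Q 0 * var 4 * var 8 * var 3 + inverse (uu Q 2) * var 4 * var 5 * var 6 \<noteq> 0"
  "var 8 * var 3 * var 4 + uu Q 1 * var 5 * var 6 * var 4 + inverse (uu Q 0) * var 5 * var 3 * var 7 \<noteq> 0"
  apply (rule nonzero_if_evaluates_to_nonzero[where g="\<lambda>k. if k \<in> {7} then 0 else 1"],
      (rule complex.evaluates_to_intros | simp add: Q_nonzero power_int_minus uu_def vv_def)+)
  apply (rule nonzero_if_evaluates_to_nonzero[where g="\<lambda>k. if k \<in> {4} then 0 else 1"],
      (rule complex.evaluates_to_intros | simp add: Q_nonzero power_int_minus uu_def vv_def)+)
  apply (rule nonzero_if_evaluates_to_nonzero[where g="\<lambda>k. if k \<in> {8} then 0 else 1"],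
      (rule complex.evaluates_to_intros | simp add: Q_nonzero power_int_minus uu_def vv_def)+)
  apply (rule nonzero_if_evaluates_to_nonzero[where g="\<lambda>k. if k \<in> {5} then 0 else 1"],
      (rule complex.evaluates_to_intros | simp add: Q_nonzero power_int_minus uu_def vv_def)+)
  apply (rule nonzero_if_evaluates_to_nonzero[where g="\<lambda>k. if k \<in> {6} then 0 else 1"],
      (rule complex.evaluates_to_intros | simp add: Q_nonzero power_int_minus uu_def vv_def)+)
  apply (rule nonzero_if_evaluates_to_nonzero[where g="\<lambda>k. if k \<in> {3} then 0 else 1"],
      (rule complex.evaluates_to_intros | simp add: Q_nonzero power_int_minus uu_def vv_def)+)
  apply (rule nonzero_if_evaluates_to_nonzero[where g="\<lambda>k. if k \<in> {7, 8} then 0 else 1"],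
      (rule complex.evaluates_to_intros | simp add: Q_nonzero power_int_minus uu_def vv_def)+)
  apply (rule nonzero_if_evaluates_to_nonzero[where g="\<lambda>k. if k \<in> {8, 6} then 0 else 1"],
      (rule complex.evaluates_to_intros | simp add: Q_nonzero power_int_minus uu_def vv_def)+)
  apply (rule nonzero_if_evaluates_to_nonzero[where g="\<lambda>k. if k \<in> {6, 7} then 0 else 1"],
      (rule complex.evaluates_to_intros | simp add: Q_nonzero power_int_minus uu_def vv_def)+)
  done

lemma img_nonzero:
  "s_img Q 0 k \<noteq> 0" "s_img Q 1 k \<noteq> 0" "s_img Q 2 k \<noteq> 0" "w0_img Q k \<noteq> 0"
  "pi_img Q k \<noteq> 0" "pi_inv_img Q k \<noteq> 0" "r_img Q k \<noteq> 0"
  by (rule forall_num9; simp add: img_simps numerators_nonzero Q_nonzero)+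

text \<open>Substituting an image table and then specialising at a second one returns the
  variables; this proves both admissibility and the inverse relations.\<close>
lemma img_evaluates_to_var:
  "evaluates_to cst (s_img Q 0) (s_img Q 0 k) (var k)"
  "evaluates_to cst (s_img Q 1) (s_img Q 1 k) (var k)"
  "evaluates_to cst (s_img Q 2) (s_img Q 2 k) (var k)"
  "evaluates_to cst (w0_img Q) (w0_img Q k) (var k)"
  "evaluates_to cst (r_img Q) (r_img Q k) (var k)"
  "evaluates_to cst (pi_inv_img Q) (pi_img Q k) (var k)"
  "evaluates_to cst (pi_img Q) (pi_inv_img Q k) (var k)"
  by (rule forall_num9; rule cst.evaluates_to_eq_value, unfold img_simps,
      (rule cst.evaluates_to_intros | simp add: Q_nonzero img_nonzero power_int_minus uu_def vv_def)+,
      (simp add: Q_nonzero img_nonzero power_int_minus field_simps)?,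
      (simp add: Q_nonzero img_simps uu_def vv_def power_int_minus field_simps)?, algebra?)+

lemma img_admissible:
  "admissible (s_img Q 0)" "admissible (s_img Q 1)" "admissible (s_img Q 2)"
  "admissible (w0_img Q)" "admissible (r_img Q)" "admissible (pi_img Q)" "admissible (pi_inv_img Q)"
  by (rule admissible_if_evaluates_to_var, rule img_evaluates_to_var)+

end

sublocale nonzero_param \<subseteq> s0: rfun_hom "s_aut Q 0"
  by (simp add: aut_eq_subst_img rfun_hom_subst img_admissible)

sublocale nonzero_param \<subseteq> s1: rfun_hom "s_aut Q 1"
  by (simp add: aut_eq_subst_img rfun_hom_subst img_admissible)

sublocale nonzero_param \<subseteq> s2: rfun_hom "s_aut Q 2"
  by (simp add: aut_eq_subst_img rfun_hom_subst img_admissible)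

sublocale nonzero_param \<subseteq> pi: rfun_hom "pi_aut Q"
  by (simp add: aut_eq_subst_img rfun_hom_subst img_admissible)

sublocale nonzero_param \<subseteq> pi_inv: rfun_hom "pi_inv_aut Q"
  by (simp add: pi_inv_aut_def rfun_hom_subst img_admissible)

sublocale nonzero_param \<subseteq> w0: rfun_hom "w0_aut Q"
  by (simp add: aut_eq_subst_img rfun_hom_subst img_admissible)

sublocale nonzero_param \<subseteq> r: rfun_hom "r_aut Q"
  by (simp add: aut_eq_subst_img rfun_hom_subst img_admissible)

context nonzero_param
begin

lemmas aut_rfun_hom = s0.rfun_hom_axioms s1.rfun_hom_axioms s2.rfun_hom_axioms
  pi.rfun_hom_axioms pi_inv.rfun_hom_axioms w0.rfun_hom_axioms r.rfun_hom_axioms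

lemma aut_var:
  "s_aut Q 0 (var k) = s_img Q 0 k" "s_aut Q 1 (var k) = s_img Q 1 k"
  "s_aut Q 2 (var k) = s_img Q 2 k" "pi_aut Q (var k) = pi_img Q k"
  "pi_inv_aut Q (var k) = pi_inv_img Q k" "w0_aut Q (var k) = w0_img Q k"
  "r_aut Q (var k) = r_img Q k"
  by (simp_all add: aut_eq_subst_img pi_inv_aut_def subst_var img_admissible)

lemma aut_img_cancel:
  "s_aut Q 0 (s_img Q 0 k) = var k" "s_aut Q 1 (s_img Q 1 k) = var k"
  "s_aut Q 2 (s_img Q 2 k) = var k" "w0_aut Q (w0_img Q k) = var k"
  "r_aut Q (r_img Q k) = var k" "pi_inv_aut Q (pi_img Q k) = var k"
  "pi_aut Q (pi_inv_img Q k) = var k"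
  by (simp_all add: aut_eq_subst_img pi_inv_aut_def subst_eq_if_evaluates_to img_admissible
      img_evaluates_to_var)

lemmas aut_simps = s0.hom_simps s1.hom_simps s2.hom_simps pi.hom_simps pi_inv.hom_simps
  w0.hom_simps r.hom_simps aut_var

lemmas aut_nonzero = img_nonzero s0.hom_eq_0_iff s1.hom_eq_0_iff s2.hom_eq_0_iff
  pi.hom_eq_0_iff pi_inv.hom_eq_0_iff w0.hom_eq_0_iff r.hom_eq_0_iff

lemma aut_inverse:
  "s_aut Q 0 \<circ> s_aut Q 0 = id" "s_aut Q 1 \<circ> s_aut Q 1 = id" "s_aut Q 2 \<circ> s_aut Q 2 = id"
  "w0_aut Q \<circ> w0_aut Q = id" "r_aut Q \<circ> r_aut Q = id"
  "pi_inv_aut Q \<circ> pi_aut Q = id" "pi_aut Q \<circ> pi_inv_aut Q = id"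
  by (rule rfun_hom_eqI, (rule rfun_hom_comp aut_rfun_hom rfun_hom_id)+,
      simp add: aut_var aut_img_cancel)+

lemma pi_s_conj:
  "pi_aut Q \<circ> s_aut Q 0 = s_aut Q 1 \<circ> pi_aut Q"
  "pi_aut Q \<circ> s_aut Q 1 = s_aut Q 2 \<circ> pi_aut Q"
  "pi_aut Q \<circ> s_aut Q 2 = s_aut Q 0 \<circ> pi_aut Q"
  by (rule rfun_hom_comp_eqI, (rule aut_rfun_hom)+,
      rule forall_num9; simp only: aut_var, unfold img_simps,
      (simp add: aut_simps aut_nonzero Q_nonzero uu_def vv_def power_int_minus field_simps)?,
      (simp add: img_simps uu_def vv_def Q_nonzero power_int_minus field_simps)?, algebra?)+

lemma w0_commute:
  "w0_aut Q \<circ> s_aut Q 0 = s_aut Q 0 \<circ> w0_aut Q"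
  "w0_aut Q \<circ> s_aut Q 1 = s_aut Q 1 \<circ> w0_aut Q"
  "w0_aut Q \<circ> s_aut Q 2 = s_aut Q 2 \<circ> w0_aut Q"
  "w0_aut Q \<circ> pi_aut Q = pi_aut Q \<circ> w0_aut Q"
  by (rule rfun_hom_comp_eqI, (rule aut_rfun_hom)+,
      rule forall_num9; simp only: aut_var, unfold img_simps,
      (simp add: aut_simps aut_nonzero Q_nonzero uu_def vv_def power_int_minus field_simps)?,
      (simp add: img_simps uu_def vv_def Q_nonzero power_int_minus field_simps)?, algebra?)+

lemma r_commute:
  "r_aut Q \<circ> s_aut Q 0 = s_aut Q 0 \<circ> r_aut Q"
  "r_aut Q \<circ> s_aut Q 1 = s_aut Q 1 \<circ> r_aut Q"
  "r_aut Q \<circ> s_aut Q 2 = s_aut Q 2 \<circ> r_aut Q"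
  "r_aut Q \<circ> pi_aut Q = pi_aut Q \<circ> r_aut Q"
  by (rule rfun_hom_comp_eqI, (rule aut_rfun_hom)+,
      rule forall_num9; simp only: aut_var, unfold img_simps,
      (simp add: aut_simps aut_nonzero Q_nonzero uu_def vv_def power_int_minus field_simps)?,
      (simp add: img_simps uu_def vv_def Q_nonzero power_int_minus field_simps)?, algebra?)+

lemma s_braid: "s_aut Q 0 \<circ> (s_aut Q 1 \<circ> s_aut Q 0) = s_aut Q 1 \<circ> (s_aut Q 0 \<circ> s_aut Q 1)"
  by (rule rfun_hom_comp_eqI, (rule aut_rfun_hom rfun_hom_comp)+,
      rule forall_num9; simp only: comp_apply aut_var, unfold img_simps,
      (simp add: aut_simps aut_nonzero Q_nonzero uu_def vv_def power_int_minus field_simps)?,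
      (unfold img_simps)?,
      (simp add: aut_simps aut_nonzero Q_nonzero uu_def vv_def power_int_minus field_simps)?,
      (simp add: img_simps uu_def vv_def Q_nonzero power_int_minus field_simps)?, algebra?)

end

section \<open>The translations and the tau functions\<close>

definition T1_inv :: "complex \<Rightarrow> rfun \<Rightarrow> rfun" where
  "T1_inv Q = s_aut Q 1 \<circ> s_aut Q 2 \<circ> pi_inv_aut Q"

definition T2_inv :: "complex \<Rightarrow> rfun \<Rightarrow> rfun" where
  "T2_inv Q = s_aut Q 2 \<circ> pi_inv_aut Q \<circ> s_aut Q 1"

definition T4_inv :: "complex \<Rightarrow> rfun \<Rightarrow> rfun" where
  "T4_inv Q = w0_aut Q \<circ> r_aut Q"

definition translation :: "complex \<Rightarrow> int \<Rightarrow> int \<Rightarrow> int \<Rightarrow> rfun \<Rightarrow> rfun" where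
  "translation Q n m N =
     iter_int (T1 Q) (T1_inv Q) n \<circ> iter_int (T2 Q) (T2_inv Q) m \<circ> iter_int (T4 Q) (T4_inv Q) N"

context nonzero_param
begin

lemma pi_inv_s_conj:
  "pi_inv_aut Q \<circ> s_aut Q 1 = s_aut Q 0 \<circ> pi_inv_aut Q"
  "pi_inv_aut Q \<circ> s_aut Q 2 = s_aut Q 1 \<circ> pi_inv_aut Q"
  "pi_inv_aut Q \<circ> s_aut Q 0 = s_aut Q 2 \<circ> pi_inv_aut Q"
  by (metis (no_types, lifting) aut_inverse(6,7) pi_s_conj comp_assoc comp_id id_comp)+

lemmas group_rewrites = pi_inv_s_conj pi_inv_s_conj[THEN comp_eq_rewrite]
  aut_inverse aut_inverse[THEN comp_id_rewrite] pi_s_conj pi_s_conj[THEN comp_eq_rewrite]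
  s_braid s_braid[THEN comp_eq_rewrite3] comp_assoc id_comp comp_id

lemmas commute_rewrites = w0_commute[symmetric] w0_commute[symmetric, THEN comp_eq_rewrite]
  r_commute[symmetric] r_commute[symmetric, THEN comp_eq_rewrite]

lemma T_inverse_pair:
  "inverse_pair (T1 Q) (T1_inv Q)" "inverse_pair (T2 Q) (T2_inv Q)" "inverse_pair (T4 Q) (T4_inv Q)"
  by (unfold_locales; simp add: T1_def T1_inv_def T2_def T2_inv_def T4_def T4_inv_def group_rewrites)+

lemma T_commute:
  "T1 Q \<circ> T2 Q = T2 Q \<circ> T1 Q" "T1 Q \<circ> T4 Q = T4 Q \<circ> T1 Q" "T2 Q \<circ> T4 Q = T4 Q \<circ> T2 Q"
proof -
  have "T1 Q \<circ> T2 Q = s_aut Q 0 \<circ> (s_aut Q 1 \<circ> (pi_aut Q \<circ> pi_aut Q))"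
    and "T2 Q \<circ> T1 Q = s_aut Q 0 \<circ> (s_aut Q 1 \<circ> (pi_aut Q \<circ> pi_aut Q))"
    by (simp_all add: T1_def T2_def group_rewrites)
  then show "T1 Q \<circ> T2 Q = T2 Q \<circ> T1 Q"
    by simp
  show "T1 Q \<circ> T4 Q = T4 Q \<circ> T1 Q" "T2 Q \<circ> T4 Q = T4 Q \<circ> T2 Q"
    by (simp_all add: T1_def T2_def T4_def group_rewrites commute_rewrites)
qed

lemma rfun_hom_T:
  "rfun_hom (T1 Q)" "rfun_hom (T1_inv Q)" "rfun_hom (T2 Q)" "rfun_hom (T2_inv Q)"
  "rfun_hom (T4 Q)" "rfun_hom (T4_inv Q)"
  by (simp_all add: T1_def T1_inv_def T2_def T2_inv_def T4_def T4_inv_def rfun_hom_comp aut_rfun_hom)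

lemma rfun_hom_translation: "rfun_hom (translation Q n m N)"
  unfolding translation_def
  by (intro rfun_hom_comp rfun_hom_iter_int T_inverse_pair rfun_hom_T)

lemma tauNM_eq_translation: "tauNM Q n m N = translation Q n m N (tau 1)"
  by (simp add: tauNM_def translation_def inverse_pair.zpow_eq_iter_int[OF T_inverse_pair(1)]
      inverse_pair.zpow_eq_iter_int[OF T_inverse_pair(2)] inverse_pair.zpow_eq_iter_int[OF T_inverse_pair(3)])

lemma translation_comp:
  "translation Q n m N \<circ> translation Q a b c = translation Q (n + a) (m + b) (N + c)"
proof -
  note iter_commute = iter_int_commute[OF T_inverse_pair(1,2) T_commute(1)]
    iter_int_commute[OF T_inverse_pair(1,3) T_commute(2)]
    iter_int_commute[OF T_inverse_pair(2,3) T_commute(3)]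
  show ?thesis
    unfolding translation_def inverse_pair.iter_int_add[OF T_inverse_pair(1)]
      inverse_pair.iter_int_add[OF T_inverse_pair(2)] inverse_pair.iter_int_add[OF T_inverse_pair(3)]
    by (simp add: comp_assoc iter_commute(3)[symmetric] iter_commute(1,2,3)[symmetric, THEN comp_eq_rewrite])
qed

lemma translation_tauNM: "translation Q n m N (tauNM Q a b c) = tauNM Q (n + a) (m + b) (N + c)"
  using translation_comp[of n m N a b c] by (simp add: tauNM_eq_translation fun_eq_iff)

lemmas iter_int_T_simps =
  inverse_pair.iter_int_0[OF T_inverse_pair(1)] inverse_pair.iter_int_1[OF T_inverse_pair(1)]
  inverse_pair.iter_int_minus_1[OF T_inverse_pair(1)]
  inverse_pair.iter_int_0[OF T_inverse_pair(2)] inverse_pair.iter_int_1[OF T_inverse_pair(2)]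
  inverse_pair.iter_int_minus_1[OF T_inverse_pair(2)]
  inverse_pair.iter_int_0[OF T_inverse_pair(3)] inverse_pair.iter_int_1[OF T_inverse_pair(3)]
  inverse_pair.iter_int_minus_1[OF T_inverse_pair(3)]

lemma T_var_eigen:
  "T1 Q (var 0) = cst Q * var 0" "T1 Q (var 1) = inverse (cst Q) * var 1"
  "T2 Q (var 0) = var 0" "T2 Q (var 1) = cst Q * var 1"
  "T4 Q (var 0) = var 0" "T4 Q (var 1) = var 1"
  by (simp_all add: T1_def T2_def T4_def aut_simps img_simps Q_nonzero field_simps)

lemma iter_int_T_var:
  "iter_int (T1 Q) (T1_inv Q) n (var 0) = cst Q powi n * var 0"
  "iter_int (T1 Q) (T1_inv Q) n (var 1) = inverse (cst Q) powi n * var 1"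
  "iter_int (T2 Q) (T2_inv Q) n (var 0) = var 0"
  "iter_int (T2 Q) (T2_inv Q) n (var 1) = cst Q powi n * var 1"
  "iter_int (T4 Q) (T4_inv Q) n (var 0) = var 0"
  "iter_int (T4 Q) (T4_inv Q) n (var 1) = var 1"
  by (rule iter_int_eigen[OF T_inverse_pair(1) rfun_hom_T(1,2)]
      iter_int_eigen[OF T_inverse_pair(2) rfun_hom_T(3,4)]
      inverse_pair.iter_int_fixed[OF T_inverse_pair(2)]
      inverse_pair.iter_int_fixed[OF T_inverse_pair(3)];
      simp add: T_var_eigen rfun_hom.hom_simps[OF rfun_hom_T(1)] rfun_hom.hom_simps[OF rfun_hom_T(3)]
      Q_nonzero)+

lemma translation_var0: "translation Q n m N (var 0) = cst Q powi n * var 0"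
  by (simp add: translation_def iter_int_T_var)

lemma translation_var1: "translation Q n m N (var 1) = cst Q powi (m - n) * var 1"
  using rfun_hom_iter_int[OF T_inverse_pair(1) rfun_hom_T(1,2)]
  by (simp add: translation_def iter_int_T_var rfun_hom.hom_simps Q_nonzero power_int_diff
      power_int_inverse field_simps)

lemma translation_alpha0: "translation Q n m N (alpha Q 0) = cst Q powi n * alpha Q 0"
  by (simp add: translation_var0)

lemma translation_alpha2: "translation Q n m N (alpha Q 2) = cst Q powi (- m) * alpha Q 2"
  using rfun_hom_translation
  by (simp add: rfun_hom.hom_simps translation_var0 translation_var1 power_int_diff
      power_int_minus Q_nonzero field_simps)

lemma T1_T2_var:
  "T1 Q (T2 Q x) = s_aut Q 0 (s_aut Q 1 (pi_aut Q (pi_aut Q x)))"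
  "T1_inv Q (T2_inv Q x) = pi_inv_aut Q (pi_inv_aut Q (s_aut Q 1 (s_aut Q 0 x)))"
proof -
  have "T1 Q \<circ> T2 Q = s_aut Q 0 \<circ> (s_aut Q 1 \<circ> (pi_aut Q \<circ> pi_aut Q))"
    by (simp add: T1_def T2_def group_rewrites)
  then show "T1 Q (T2 Q x) = s_aut Q 0 (s_aut Q 1 (pi_aut Q (pi_aut Q x)))"
    by (metis comp_apply)
  let ?S = "pi_inv_aut Q \<circ> pi_inv_aut Q \<circ> s_aut Q 1 \<circ> s_aut Q 0"
  have "?S \<circ> (T2 Q \<circ> T1 Q) = id" and T_inv: "(T2 Q \<circ> T1 Q) \<circ> (T1_inv Q \<circ> T2_inv Q) = id"
    by (simp_all add: T1_def T2_def T1_inv_def T2_inv_def group_rewrites)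
  then have "T1_inv Q \<circ> T2_inv Q = (?S \<circ> (T2 Q \<circ> T1 Q)) \<circ> (T1_inv Q \<circ> T2_inv Q)"
    by simp
  also have "\<dots> = ?S \<circ> ((T2 Q \<circ> T1 Q) \<circ> (T1_inv Q \<circ> T2_inv Q))"
    by (simp only: comp_assoc)
  also have "\<dots> = ?S"
    by (simp add: T_inv)
  finally show "T1_inv Q (T2_inv Q x) = pi_inv_aut Q (pi_inv_aut Q (s_aut Q 1 (s_aut Q 0 x)))"
    by (metis comp_apply)
qed

lemma tauNM_neighbours:
  "tauNM Q 0 0 1 = var 7"
  "tauNM Q 0 0 (- 1) = w0_img Q 7"
  "tauNM Q 1 1 0 = s_img Q 0 3"
  "tauNM Q (- 1) (- 1) 0 = pi_inv_aut Q (pi_inv_aut Q (s_img Q 1 4))"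
  "tauNM Q 0 1 0 = var 5"
  "tauNM Q 0 (- 1) 0 = s_aut Q 2 (pi_inv_aut Q (s_img Q 1 4))"
  "tauNM Q 1 0 0 = pi_aut Q (s_aut Q 2 (s_img Q 1 4))"
  "tauNM Q (- 1) 0 0 = var 3"
  by (simp_all only: tauNM_eq_translation translation_def iter_int_T_simps T1_T2_var comp_apply id_apply
      tau_simps)
    (simp_all add: T1_def T1_inv_def T2_def T2_inv_def T4_def T4_inv_def aut_var img_simps)

end

definition bilinear1 :: "complex \<Rightarrow> int \<Rightarrow> int \<Rightarrow> int \<Rightarrow> rfun" where
  "bilinear1 Q n m N =
     (1 - cst Q powi (-12*m) * alpha Q 2 ^ 12) * tauNM Q n m (N+1) * tauNM Q n m (N-1)
     + cst Q powi (n - 11*m) * alpha Q 0 * alpha Q 2 ^ 11 * tauNM Q (n+1) (m+1) N * tauNM Q (n-1) (m-1) N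
     - cst Q powi (n - 2*m) * alpha Q 0 * alpha Q 2 ^ 2 * tauNM Q n (m+1) N * tauNM Q n (m-1) N"

definition bilinear2 :: "complex \<Rightarrow> int \<Rightarrow> int \<Rightarrow> int \<Rightarrow> rfun" where
  "bilinear2 Q n m N =
     (1 - cst Q powi (12*n) * alpha Q 0 ^ 12) * tauNM Q n m (N+1) * tauNM Q n m (N-1)
     + cst Q powi (10*n + m) * alpha Q 0 ^ 10 * alpha Q 2 powi (-1) * tauNM Q (n+1) m N * tauNM Q (n-1) m N
     - cst Q powi (n + m) * alpha Q 0 * alpha Q 2 powi (-1) * tauNM Q (n+1) (m+1) N * tauNM Q (n-1) (m-1) N"

definition bilinear3 :: "complex \<Rightarrow> int \<Rightarrow> int \<Rightarrow> int \<Rightarrow> rfun" where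
  "bilinear3 Q n m N =
     (1 - cst Q powi (12*n - 12*m) * alpha Q 0 ^ 12 * alpha Q 2 ^ 12) * tauNM Q n m (N+1) * tauNM Q n m (N-1)
     + cst Q powi (10*n - 11*m) * alpha Q 0 ^ 10 * alpha Q 2 ^ 11 * tauNM Q (n+1) m N * tauNM Q (n-1) m N
     - cst Q powi (n - 2*m) * alpha Q 0 * alpha Q 2 ^ 2 * tauNM Q n (m+1) N * tauNM Q n (m-1) N"

context nonzero_param
begin

lemma bilinear_origin: "bilinear1 Q 0 0 0 = 0" "bilinear2 Q 0 0 0 = 0" "bilinear3 Q 0 0 0 = 0"
  unfolding bilinear1_def bilinear2_def bilinear3_def
  by (simp only: mult_zero_right add_0 add_0_right diff_0 diff_self minus_zero
        power_int_0_right mult_1 tauNM_neighbours s1_img,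
      simp add: aut_simps pi_inv_img pi_img aut_nonzero Q_nonzero uu_def vv_def power_int_minus
        field_simps,
      unfold img_simps,
      simp add: aut_simps aut_nonzero Q_nonzero uu_def vv_def power_int_minus field_simps,
      (simp add: img_simps uu_def vv_def Q_nonzero power_int_minus field_simps)?, algebra)+

lemma translation_bilinear:
  "translation Q n m N (bilinear1 Q 0 0 0) = bilinear1 Q n m N"
  "translation Q n m N (bilinear2 Q 0 0 0) = bilinear2 Q n m N"
  "translation Q n m N (bilinear3 Q 0 0 0) = bilinear3 Q n m N"
  unfolding bilinear1_def bilinear2_def bilinear3_def
  by (simp_all only: rfun_hom.hom_simps[OF rfun_hom_translation] translation_tauNM
      translation_alpha0 translation_alpha2 add_0 add_0_right diff_0 mult_zero_right
      power_int_0_right mult_1 mult_1_right,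
      simp_all add: Q_nonzero power_int_add power_int_diff power_int_minus power_int_numeral_mult,
      simp_all add: Q_nonzero power_mult_distrib field_simps)

lemma bilinear_eq_0:
  "bilinear1 Q n m N = 0" "bilinear2 Q n m N = 0" "bilinear3 Q n m N = 0"
  by (metis translation_bilinear bilinear_origin rfun_hom.hom_0[OF rfun_hom_translation])+

end

theorem propositionB2:
  fixes Q :: complex and n m N :: int
  assumes "Q \<noteq> 0"
    and "\<forall>k::nat. 0 < k \<longrightarrow> Q ^ k \<noteq> 1"
  shows
    "((1 - cst Q powi (-12*m) * alpha Q 2 ^ 12) * tauNM Q n m (N+1) * tauNM Q n m (N-1)
       + cst Q powi (n - 11*m) * alpha Q 0 * alpha Q 2 ^ 11 * tauNM Q (n+1) (m+1) N * tauNM Q (n-1) (m-1) N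
       - cst Q powi (n - 2*m) * alpha Q 0 * alpha Q 2 ^ 2 * tauNM Q n (m+1) N * tauNM Q n (m-1) N = 0) \<and>
    ((1 - cst Q powi (12*n) * alpha Q 0 ^ 12) * tauNM Q n m (N+1) * tauNM Q n m (N-1)
       + cst Q powi (10*n + m) * alpha Q 0 ^ 10 * alpha Q 2 powi (-1) * tauNM Q (n+1) m N * tauNM Q (n-1) m N
       - cst Q powi (n + m) * alpha Q 0 * alpha Q 2 powi (-1) * tauNM Q (n+1) (m+1) N * tauNM Q (n-1) (m-1) N = 0) \<and>
    ((1 - cst Q powi (12*n - 12*m) * alpha Q 0 ^ 12 * alpha Q 2 ^ 12) * tauNM Q n m (N+1) * tauNM Q n m (N-1)
       + cst Q powi (10*n - 11*m) * alpha Q 0 ^ 10 * alpha Q 2 ^ 11 * tauNM Q (n+1) m N * tauNM Q (n-1) m N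
       - cst Q powi (n - 2*m) * alpha Q 0 * alpha Q 2 ^ 2 * tauNM Q n (m+1) N * tauNM Q n (m-1) N = 0)"
proof -
  interpret nonzero_param Q
    using assms(1) by unfold_locales
  show ?thesis
    using bilinear_eq_0[of n m N] unfolding bilinear1_def bilinear2_def bilinear3_def by blast
qed

end
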